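(* Let $r>0$. On the range $s>|r-1|$, the functional equation $f_1(s,r)+f_1(s+2r,r)=\frac{1}{s+1}$ has a unique solution satisfying $\lim_{s\to\infty}f_1(s,r)=0$, namely $$f_1(s,r)=\dfrac{1}{2-2r+2s+2\,\mathop{K}\limits_{n=1}^{\infty}\left(\dfrac{n^2r^2}{1-r+s}\right)},$$ and the functional equation $f_2(s,r)+f_2(s+2r,r)=\frac{1}{s+2r-1}$ has a unique solution satisfying $\lim_{s\to\infty}f_2(s,r)=0$, namely $$f_2(s,r)=\dfrac{1}{2r-2+2s+2\,\mathop{K}\limits_{n=1}^{\infty}\left(\dfrac{n^2r^2}{r-1+s}\right)}.$$
   Context: $\mathop{K}_{n=1}^{\infty}\left(\frac{a_n}{b}\right)$ denotes the continued fraction $\cfrac{a_1}{b+\cfrac{a_2}{b+\cdots}}$ (limit of convergents). *)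

theory Defs
  imports Complex_Main
begin

text \<open>cf_from a b m k = a_m/(b + a_(m+1)/(b + ... + a_(m+k-1)/b)) (k levels).
  The n-th convergent of K_(n>=1) (a_n / b) is cf_from a b 1 n.\<close>
fun cf_from :: "(nat \<Rightarrow> real) \<Rightarrow> real \<Rightarrow> nat \<Rightarrow> nat \<Rightarrow> real" where
  "cf_from a b m 0 = 0"
| "cf_from a b m (Suc k) = a m / (b + cf_from a b (Suc m) k)"

definition cf_convergent :: "(nat \<Rightarrow> real) \<Rightarrow> real \<Rightarrow> nat \<Rightarrow> real" where
  "cf_convergent a b n = cf_from a b 1 n"

definition cf_K :: "(nat \<Rightarrow> real) \<Rightarrow> real \<Rightarrow> real" where
  "cf_K a b = lim (cf_convergent a b)"

end

theory Submission
  imports Defs "HOL-Real_Asymp.Real_Asymp"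
begin

(* For b > 0 put z = (b + r) / (2r).  The binomial moments
     M_k(z) = sum_m (m choose k) m! / (2^(m+1) (z)_(m+1)) = int_0^1 t^(z-1) (1-t)^k / (1+t)^(k+1) dt
   satisfy (k+1) M_(k+1) + (2z - 1) M_k - k M_(k-1) = [k = 0], so t_n = (n+1) r M_(n+1) / M_n is a
   positive tail sequence of K(n^2 r^2 / b).  A positive tail lies between consecutive convergents,
   whose differences r / (g_(N+1) g_N) tend to 0 because the rescaled denominators g_N grow like
   log N.  Hence K(n^2 r^2 / b) = t_0 = r / M_0(z) - b, i.e. 1 / (2b + 2K) = M_0(z) / (2r).  For
   b = 1 - r + s or b = r - 1 + s, shifting s by 2r shifts z by 1, and M_0(z) + M_0(z+1) = 1/z is the
   functional equation.  Two solutions tending to 0 differ by a function that changes sign under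
   s -> s + 2r and tends to 0, so they agree. *)

section \<open>Continued fractions with nonnegative partial numerators\<close>

fun cf_from_tail :: "(nat \<Rightarrow> real) \<Rightarrow> real \<Rightarrow> nat \<Rightarrow> nat \<Rightarrow> real \<Rightarrow> real" where
  "cf_from_tail a b m 0 t = t"
| "cf_from_tail a b m (Suc k) t = a m / (b + cf_from_tail a b (Suc m) k t)"

lemma cf_from_eq_tail_0: "cf_from a b m k = cf_from_tail a b m k 0"
  by (induction k arbitrary: m) simp_all

lemma cf_from_tail_Suc_inner: "cf_from_tail a b m (Suc k) t = cf_from_tail a b m k (a (m + k) / (b + t))"
  by (induction k arbitrary: m) simp_all

lemma cf_from_tail_nonneg:
  assumes "\<And>n. a n \<ge> 0" "b > 0" "t \<ge> 0"
  shows "cf_from_tail a b m k t \<ge> 0"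
  using assms by (induction k arbitrary: m) (auto intro!: divide_nonneg_pos add_pos_nonneg)

lemma cf_from_tail_between:
  assumes a: "\<And>n. a n \<ge> 0" and b: "b > 0" and t: "t \<ge> 0"
  shows "min (cf_from a b m (Suc k)) (cf_from a b m k) \<le> cf_from_tail a b m (Suc k) t \<and>
         cf_from_tail a b m (Suc k) t \<le> max (cf_from a b m (Suc k)) (cf_from a b m k)"
  unfolding cf_from_eq_tail_0
proof (induction k arbitrary: m)
  case 0
  have "a m / (b + t) \<le> a m / b" using a b t by (intro divide_left_mono) auto
  then show ?case using a b t by simp
next
  case (Suc k)
  define x where "x = cf_from_tail a b (Suc m) (Suc k) t"
  define X where "X = cf_from_tail a b (Suc m) (Suc k) 0"
  define Y where "Y = cf_from_tail a b (Suc m) k 0"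
  have IH: "min X Y \<le> x" "x \<le> max X Y"
    using Suc.IH[of "Suc m"] unfolding x_def X_def Y_def by auto
  have nonneg: "x \<ge> 0" "X \<ge> 0" "Y \<ge> 0"
    unfolding x_def X_def Y_def using cf_from_tail_nonneg a b t by auto
  have anti: "a m / (b + w) \<le> a m / (b + v)" if "0 \<le> v" "v \<le> w" for v w
    using a b that by (intro divide_left_mono) auto
  have "min (a m / (b + X)) (a m / (b + Y)) \<le> a m / (b + x) \<and>
      a m / (b + x) \<le> max (a m / (b + X)) (a m / (b + Y))"
  proof (cases "X \<le> Y")
    case True
    then show ?thesis using IH nonneg anti[of X x] anti[of x Y]
      by (simp add: min_le_iff_disj le_max_iff_disj)
  next
    case False
    then show ?thesis using IH nonneg anti[of Y x] anti[of x X]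
      by (simp add: min_le_iff_disj le_max_iff_disj)
  qed
  then show ?case unfolding x_def X_def Y_def by simp
qed

lemma cf_from_tail_unfold:
  assumes "\<And>n. t n = a (Suc n) / (b + t (Suc n))"
  shows "t n = cf_from_tail a b (Suc n) k (t (n + k))"
proof (induction k arbitrary: n)
  case (Suc k)
  have "t n = a (Suc n) / (b + t (Suc n))" by (rule assms)
  also have "t (Suc n) = cf_from_tail a b (Suc (Suc n)) k (t (Suc n + k))" by (rule Suc.IH)
  finally show ?case by simp
qed simp

lemma cf_convergent_dist_tail_le:
  assumes a: "\<And>n. a n \<ge> 0" and b: "b > 0" and t: "\<And>n. t n \<ge> 0"
    and tail: "\<And>n. t n = a (Suc n) / (b + t (Suc n))"
  shows "\<bar>cf_convergent a b N - t 0\<bar> \<le> \<bar>cf_convergent a b (Suc N) - cf_convergent a b N\<bar>"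
proof -
  have "t 0 = cf_from_tail a b 1 (Suc N) (t (Suc N))"
    using cf_from_tail_unfold[of t a b, OF tail, of 0 "Suc N"] by simp
  then have "min (cf_convergent a b (Suc N)) (cf_convergent a b N) \<le> t 0 \<and>
      t 0 \<le> max (cf_convergent a b (Suc N)) (cf_convergent a b N)"
    unfolding cf_convergent_def using cf_from_tail_between[OF a b t] by presburger
  then show ?thesis by (auto simp: min_def max_def split: if_splits)
qed

lemma cf_convergent_tendsto_tail:
  assumes "\<And>n. a n \<ge> 0" "b > 0" "\<And>n. t n \<ge> 0"
    and "\<And>n. t n = a (Suc n) / (b + t (Suc n))"
    and "(\<lambda>N. \<bar>cf_convergent a b (Suc N) - cf_convergent a b N\<bar>) \<longlonglongrightarrow> 0"
  shows "cf_convergent a b \<longlonglongrightarrow> t 0"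
proof (rule LIM_zero_cancel, rule tendsto_0_le[OF assms(5), where K = 1])
  show "\<forall>\<^sub>F N in sequentially. norm (cf_convergent a b N - t 0)
      \<le> norm \<bar>cf_convergent a b (Suc N) - cf_convergent a b N\<bar> * 1"
    using cf_convergent_dist_tail_le[of a b t, OF assms(1-4)] by simp
qed

(* cf_num a b (Suc n) / cf_den a b (Suc n) is the n-th convergent A_n / B_n;
   index 0 holds A_(-1) = 1 and B_(-1) = 0. *)

fun cf_num :: "(nat \<Rightarrow> real) \<Rightarrow> real \<Rightarrow> nat \<Rightarrow> real" where
  "cf_num a b 0 = 1"
| "cf_num a b (Suc 0) = 0"
| "cf_num a b (Suc (Suc n)) = b * cf_num a b (Suc n) + a (Suc n) * cf_num a b n"

fun cf_den :: "(nat \<Rightarrow> real) \<Rightarrow> real \<Rightarrow> nat \<Rightarrow> real" where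
  "cf_den a b 0 = 0"
| "cf_den a b (Suc 0) = 1"
| "cf_den a b (Suc (Suc n)) = b * cf_den a b (Suc n) + a (Suc n) * cf_den a b n"

lemma cf_den_pos:
  assumes "\<And>n. a n \<ge> 0" "b > 0"
  shows "cf_den a b (Suc n) > 0"
proof -
  have "cf_den a b (Suc n) > 0 \<and> cf_den a b n \<ge> 0"
  proof (induction n)
    case (Suc n)
    then show ?case using assms by (simp add: add_pos_nonneg)
  qed simp
  then show ?thesis ..
qed

lemma cf_from_tail_continuants:
  assumes a: "\<And>n. a n \<ge> 0" and b: "b > 0" and t: "t \<ge> 0"
  shows "cf_from_tail a b 1 n t
    = (cf_num a b (Suc n) + cf_num a b n * t) / (cf_den a b (Suc n) + cf_den a b n * t)"
  using t
proof (induction n arbitrary: t)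
  case (Suc n)
  define s where "s = a (Suc n) / (b + t)"
  have "s \<ge> 0" unfolding s_def using a b Suc.prems by simp
  have "cf_from_tail a b 1 (Suc n) t = cf_from_tail a b 1 n s"
    unfolding s_def using cf_from_tail_Suc_inner[of a b 1 n t] by simp
  also have "\<dots> = (cf_num a b (Suc n) + cf_num a b n * s) / (cf_den a b (Suc n) + cf_den a b n * s)"
    using Suc.IH \<open>s \<ge> 0\<close> .
  also have "\<dots> = ((cf_num a b (Suc n) + cf_num a b n * s) * (b + t))
      / ((cf_den a b (Suc n) + cf_den a b n * s) * (b + t))"
    using b Suc.prems by simp
  also have "\<dots> = (cf_num a b (Suc n) * (b + t) + cf_num a b n * a (Suc n))
      / (cf_den a b (Suc n) * (b + t) + cf_den a b n * a (Suc n))"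
    using b Suc.prems unfolding s_def by (simp add: distrib_right)
  also have "\<dots> = (cf_num a b (Suc (Suc n)) + cf_num a b (Suc n) * t)
      / (cf_den a b (Suc (Suc n)) + cf_den a b (Suc n) * t)"
    by (simp add: algebra_simps)
  finally show ?case .
qed simp

lemma cf_convergent_continuants:
  assumes "\<And>n. a n \<ge> 0" "b > 0"
  shows "cf_convergent a b n = cf_num a b (Suc n) / cf_den a b (Suc n)"
  unfolding cf_convergent_def cf_from_eq_tail_0 using cf_from_tail_continuants[of a b 0 n] assms by simp

lemma cf_continuant_det:
  "cf_num a b (Suc n) * cf_den a b n - cf_num a b n * cf_den a b (Suc n) = (-1) ^ Suc n * (\<Prod>j=1..n. a j)"
proof (induction n)
  case (Suc n)
  have "cf_num a b (Suc (Suc n)) * cf_den a b (Suc n) - cf_num a b (Suc n) * cf_den a b (Suc (Suc n))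
      = - a (Suc n) * (cf_num a b (Suc n) * cf_den a b n - cf_num a b n * cf_den a b (Suc n))"
    by (simp add: algebra_simps)
  then show ?case using Suc.IH by simp
qed simp

lemma cf_convergent_diff:
  assumes a: "\<And>n. a n \<ge> 0" and b: "b > 0"
  shows "\<bar>cf_convergent a b (Suc N) - cf_convergent a b N\<bar>
    = (\<Prod>j=1..Suc N. a j) / (cf_den a b (Suc (Suc N)) * cf_den a b (Suc N))"
proof -
  have pos: "cf_den a b (Suc (Suc N)) > 0" "cf_den a b (Suc N) > 0"
    using cf_den_pos[of a b] a b by blast+
  have "cf_convergent a b (Suc N) - cf_convergent a b N
      = (cf_num a b (Suc (Suc N)) * cf_den a b (Suc N) - cf_num a b (Suc N) * cf_den a b (Suc (Suc N)))
        / (cf_den a b (Suc (Suc N)) * cf_den a b (Suc N))"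
    using pos by (simp add: cf_convergent_continuants[OF a b] diff_frac_eq)
  also have "\<dots> = (-1) ^ N * (\<Prod>j=1..Suc N. a j) / (cf_den a b (Suc (Suc N)) * cf_den a b (Suc N))"
    unfolding cf_continuant_det by simp
  finally show ?thesis
    using pos a by (simp add: abs_mult abs_divide prod_nonneg)
qed

section \<open>A factorial series and its binomial moments\<close>

definition fs_term :: "real \<Rightarrow> nat \<Rightarrow> real" where
  "fs_term z m = fact m / (2 ^ Suc m * pochhammer z (Suc m))"

lemma fs_term_pos: "z > 0 \<Longrightarrow> fs_term z m > 0"
  by (simp add: fs_term_def pochhammer_pos)

lemma fs_term_0 [simp]: "fs_term z 0 = 1 / (2 * z)"
  by (simp add: fs_term_def)

lemma fs_term_Suc_eq:
  "fs_term z (Suc m) = (real m + 1) / (2 * (z + real m + 1)) * fs_term z m"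
  by (simp add: fs_term_def pochhammer_Suc[of z "Suc m"] add_ac)

lemma fs_term_Suc:
  assumes "z > 0"
  shows "2 * (z + real m + 1) * fs_term z (Suc m) = (real m + 1) * fs_term z m"
  using assms by (simp add: fs_term_Suc_eq)

lemma fs_term_shift:
  assumes "z > 0"
  shows "fs_term (z + 1) m = fs_term z m - 2 * fs_term z (Suc m)"
proof -
  have "pochhammer (z + 1) (Suc m) = pochhammer z (Suc m) * (z + real m + 1) / z"
    using assms pochhammer_rec[of z "Suc m"] pochhammer_Suc[of z "Suc m"] by (simp add: add_ac)
  then have "fs_term (z + 1) m = z / (z + real m + 1) * fs_term z m"
    by (simp add: fs_term_def mult_ac)
  also have "\<dots> = fs_term z m - 2 * fs_term z (Suc m)"
    using assms by (simp add: fs_term_Suc_eq field_simps)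
  finally show ?thesis .
qed

lemma fs_term_le_geometric:
  assumes "z > 0"
  shows "fs_term z m \<le> (1/2) ^ m / (2 * z)"
proof (induction m)
  case (Suc m)
  have "2 * (z + real m + 1) * fs_term z (Suc m) \<le> 2 * (z + real m + 1) * (fs_term z m / 2)"
    using fs_term_Suc[OF assms, of m] fs_term_pos[OF assms, of m] assms by simp
  then have "fs_term z (Suc m) \<le> fs_term z m / 2"
    using assms by (subst (asm) mult_le_cancel_left_pos) auto
  then show ?case using Suc.IH by simp
qed simp

lemma summable_poly_times_fs_term:
  assumes "z > 0" and "\<And>m. \<bar>f m\<bar> \<le> C * (real m + 1) ^ p"
  shows "summable (\<lambda>m. f m * fs_term z m)"
proof (rule summable_comparison_test')
  have "(\<lambda>m. (real m + 1) ^ p * (1/2) ^ m) \<in> O(\<lambda>m. (3/4) ^ m)"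
    by real_asymp
  then have "summable (\<lambda>m. (real m + 1) ^ p * (1/2) ^ m)"
    by (rule summable_comparison_test_bigo[rotated]) (simp add: summable_geometric)
  then show "summable (\<lambda>m. C / (2 * z) * ((real m + 1) ^ p * (1/2) ^ m))"
    by (rule summable_mult)
  fix m
  have "\<bar>f m\<bar> * fs_term z m \<le> C * (real m + 1) ^ p * ((1/2) ^ m / (2 * z))"
    using assms fs_term_pos[OF assms(1), of m] fs_term_le_geometric[OF assms(1), of m]
    by (intro mult_mono) (auto intro: order_trans[OF abs_ge_zero])
  then show "norm (f m * fs_term z m) \<le> C / (2 * z) * ((real m + 1) ^ p * (1/2) ^ m)"
    using fs_term_pos[OF assms(1), of m] by (simp add: abs_mult mult_ac)
qed

lemma real_binomial_le_power: "real (m choose n) \<le> (real m + 1) ^ n"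
proof (cases "n \<le> m")
  case True
  have "real (m choose n) \<le> real m ^ n"
    using binomial_le_pow[OF True] by (metis of_nat_le_iff of_nat_power)
  also have "\<dots> \<le> (real m + 1) ^ n" by (intro power_mono) auto
  finally show ?thesis .
qed (simp add: binomial_eq_0)

definition fs_moment :: "real \<Rightarrow> nat \<Rightarrow> real" where
  "fs_moment z n = (\<Sum>m. real (m choose n) * fs_term z m)"

lemma summable_fs_moment: "z > 0 \<Longrightarrow> summable (\<lambda>m. real (m choose n) * fs_term z m)"
  by (rule summable_poly_times_fs_term[where C = 1 and p = n]) (use real_binomial_le_power in auto)

lemma fs_moment_sums: "z > 0 \<Longrightarrow> (\<lambda>m. real (m choose n) * fs_term z m) sums fs_moment z n"
  unfolding fs_moment_def by (rule summable_sums[OF summable_fs_moment])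

lemma fs_moment_pos:
  assumes "z > 0"
  shows "fs_moment z n > 0"
  unfolding fs_moment_def
proof (rule suminf_pos2[OF summable_fs_moment[OF assms]])
  show "0 \<le> real (m choose n) * fs_term z m" for m
    using fs_term_pos[OF assms, of m] by simp
  show "0 < real (n choose n) * fs_term z n"
    using fs_term_pos[OF assms, of n] by simp
qed

lemma fs_moment_0_shift:
  assumes "z > 0"
  shows "fs_moment z 0 + fs_moment (z + 1) 0 = 1 / z"
proof -
  have "summable (fs_term z)" "summable (fs_term (z + 1))"
    using summable_fs_moment[of z 0] summable_fs_moment[of "z + 1" 0] assms by simp_all
  then have "(\<lambda>m. 2 * fs_term z m) \<longlonglongrightarrow> 0"
    using summable_LIMSEQ_zero tendsto_mult_right_zero by blast
  then have "(\<lambda>m. 2 * fs_term z m - 2 * fs_term z (Suc m)) sums (2 * fs_term z 0)"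
    using telescope_sums' by fastforce
  then have "(\<lambda>m. fs_term z m + fs_term (z + 1) m) sums (1 / z)"
    using assms by (simp add: fs_term_shift)
  moreover have "(\<lambda>m. fs_term z m + fs_term (z + 1) m) sums (fs_moment z 0 + fs_moment (z + 1) 0)"
    unfolding fs_moment_def using \<open>summable (fs_term z)\<close> \<open>summable (fs_term (z + 1))\<close>
    by (simp add: sums_add summable_sums)
  ultimately show ?thesis using sums_unique2 by blast
qed

lemma fs_moment_0_le: "z > 0 \<Longrightarrow> fs_moment z 0 \<le> 1 / z"
  using fs_moment_0_shift[of z] fs_moment_pos[of "z + 1" 0] by simp

lemma binomial_moment_identity:
  "Suc k * (m choose Suc k) + (Suc m choose k) * Suc m = (2 * m + 1) * (m choose k) + k * (m choose (k - 1))"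
proof (cases k)
  case (Suc j)
  show ?thesis
  proof (cases "j < m")
    case True
    then obtain d where m: "m = j + Suc d" using less_imp_add_positive by (metis Suc_pred' add_Suc_right)
    have "Suc (Suc j) * (m choose Suc (Suc j)) = (m - Suc j) * (m choose Suc j)"
         "Suc j * (m choose Suc j) = (m - j) * (m choose j)"
      by (metis binomial_absorption binomial_absorb_comp)+
    moreover have "m - Suc j = d" "m - j = Suc d" using m by simp_all
    ultimately have "Suc (Suc j) * (m choose Suc (Suc j)) = d * (m choose Suc j)"
         "Suc j * (m choose Suc j) = Suc d * (m choose j)" by simp_all
    then show ?thesis unfolding Suc by (simp add: m algebra_simps)
  next
    case False
    then show ?thesis using Suc by (auto simp: binomial_eq_0 not_less le_Suc_eq)
  qed
qed simp

lemma summable_linear_fs_moment: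
  assumes "z > 0"
  shows "summable (\<lambda>m. (c + d * real m) * real (m choose k) * fs_term z m)"
proof (rule summable_poly_times_fs_term[OF assms, where C = "\<bar>c\<bar> + \<bar>d\<bar>" and p = "Suc k"])
  fix m
  have "\<bar>c + d * real m\<bar> \<le> (\<bar>c\<bar> + \<bar>d\<bar>) * (real m + 1)"
    by (simp add: abs_mult algebra_simps order_trans[OF abs_triangle_ineq])
  then have "\<bar>c + d * real m\<bar> * real (m choose k) \<le> (\<bar>c\<bar> + \<bar>d\<bar>) * (real m + 1) * (real m + 1) ^ k"
    using real_binomial_le_power[of m k] by (intro mult_mono) auto
  then show "\<bar>(c + d * real m) * real (m choose k)\<bar> \<le> (\<bar>c\<bar> + \<bar>d\<bar>) * (real m + 1) ^ Suc k"
    by (simp add: abs_mult mult_ac)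
qed

lemma fs_moment_shifted_sums:
  assumes z: "z > 0"
  shows "(\<lambda>m. real (Suc m) * real (Suc m choose k) * fs_term z m)
    sums ((\<Sum>m. (2 * z + 2 * real m) * real (m choose k) * fs_term z m) - (if k = 0 then 1 else 0))"
proof -
  define u where "u m = (2 * z + 2 * real m) * real (m choose k) * fs_term z m" for m
  have "summable u"
    unfolding u_def by (rule summable_linear_fs_moment[OF z])
  moreover have "u (Suc m) = real (Suc m) * real (Suc m choose k) * fs_term z m" for m
  proof -
    have "u (Suc m) = real (Suc m choose k) * (2 * (z + real m + 1) * fs_term z (Suc m))"
      unfolding u_def by (simp add: algebra_simps)
    then show ?thesis unfolding fs_term_Suc[OF z] by simp
  qed
  moreover have "u 0 = (if k = 0 then 1 else 0)"
    using z by (simp add: u_def)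
  ultimately show ?thesis
    unfolding u_def[symmetric] using sums_Suc_iff[of u] summable_sums[of u] by auto
qed

lemma fs_moment_recurrence:
  assumes z: "z > 0"
  shows "real (Suc k) * fs_moment z (Suc k) + (2 * z - 1) * fs_moment z k - real k * fs_moment z (k - 1)
    = (if k = 0 then 1 else 0)"
proof -
  let ?g = "fs_term z"
  define U where "U = (\<Sum>m. (2 * z + 2 * real m) * real (m choose k) * ?g m)"
  define V where "V = (\<Sum>m. (1 + 2 * real m) * real (m choose k) * ?g m)"
  have pointwise: "(\<lambda>m. real (Suc k) * (real (m choose Suc k) * ?g m) + real (Suc m) * real (Suc m choose k) * ?g m)
      = (\<lambda>m. (1 + 2 * real m) * real (m choose k) * ?g m + real k * (real (m choose (k - 1)) * ?g m))"
  proof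
    fix m
    have "real (Suc k) * real (m choose Suc k) + real (Suc m) * real (Suc m choose k)
        = (1 + 2 * real m) * real (m choose k) + real k * real (m choose (k - 1))"
      using arg_cong[OF binomial_moment_identity[of k m], of real] by (simp add: algebra_simps)
    from arg_cong[OF this, of "\<lambda>x. x * ?g m"]
    show "real (Suc k) * (real (m choose Suc k) * ?g m) + real (Suc m) * real (Suc m choose k) * ?g m
        = (1 + 2 * real m) * real (m choose k) * ?g m + real k * (real (m choose (k - 1)) * ?g m)"
      by (simp add: algebra_simps)
  qed
  have lhs: "(\<lambda>m. real (Suc k) * (real (m choose Suc k) * ?g m) + real (Suc m) * real (Suc m choose k) * ?g m)
      sums (real (Suc k) * fs_moment z (Suc k) + (U - (if k = 0 then 1 else 0)))"
    unfolding U_def by (intro sums_add sums_mult fs_moment_sums fs_moment_shifted_sums z)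
  have rhs: "(\<lambda>m. (1 + 2 * real m) * real (m choose k) * ?g m + real k * (real (m choose (k - 1)) * ?g m))
      sums (V + real k * fs_moment z (k - 1))"
    unfolding V_def by (intro sums_add sums_mult fs_moment_sums summable_sums summable_linear_fs_moment z)
  have "real (Suc k) * fs_moment z (Suc k) + (U - (if k = 0 then 1 else 0)) = V + real k * fs_moment z (k - 1)"
    using lhs rhs unfolding pointwise by (rule sums_unique2)
  moreover have "(\<lambda>m. (2 * z - 1) * (real (m choose k) * ?g m)) sums (U - V)"
  proof -
    have "(\<lambda>m. (2 * z + 2 * real m) * real (m choose k) * ?g m - (1 + 2 * real m) * real (m choose k) * ?g m)
        sums (U - V)"
      unfolding U_def V_def by (intro sums_diff summable_sums summable_linear_fs_moment z)
    then show ?thesis by (simp add: algebra_simps)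
  qed
  then have "U - V = (2 * z - 1) * fs_moment z k"
    using sums_unique2 sums_mult[OF fs_moment_sums[OF z]] by blast
  ultimately show ?thesis by linarith
qed

section \<open>The continued fraction with partial numerators n^2 r^2\<close>

abbreviation square_numerators :: "real \<Rightarrow> nat \<Rightarrow> real" where
  "square_numerators r \<equiv> \<lambda>n. (real n)^2 * r^2"

fun wallis_ratio :: "nat \<Rightarrow> real" where
  "wallis_ratio 0 = 1"
| "wallis_ratio (Suc 0) = 1"
| "wallis_ratio (Suc (Suc n)) = (real n + 2) / (real n + 1) * wallis_ratio n"

lemma wallis_ratio_pos: "wallis_ratio n > 0"
  by (induction n rule: wallis_ratio.induct) auto

lemma wallis_ratio_mult_Suc: "wallis_ratio (Suc n) * wallis_ratio n = real n + 1"
proof (induction n)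
  case (Suc n)
  have "wallis_ratio (Suc (Suc n)) * wallis_ratio (Suc n) = (real n + 2) / (real n + 1) * (wallis_ratio (Suc n) * wallis_ratio n)"
    by simp
  then show ?case using Suc.IH by simp
qed simp

lemma wallis_ratio_sq_le: "(wallis_ratio n)^2 \<le> 2 * real n + 1"
proof (induction n rule: wallis_ratio.induct)
  case (3 n)
  have "(real n + 2)^2 * (2 * real n + 1) \<le> (2 * real n + 5) * (real n + 1)^2"
    by (simp add: power2_eq_square algebra_simps)
  then have "((real n + 2) / (real n + 1))^2 * (2 * real n + 1) \<le> 2 * real n + 5"
    by (simp add: power_divide pos_divide_le_eq)
  moreover have "((real n + 2) / (real n + 1))^2 * (wallis_ratio n)^2 \<le> ((real n + 2) / (real n + 1))^2 * (2 * real n + 1)"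
    using 3 by (intro mult_left_mono) auto
  moreover have "(wallis_ratio (Suc (Suc n)))^2 = ((real n + 2) / (real n + 1))^2 * (wallis_ratio n)^2"
    by (simp only: wallis_ratio.simps power_mult_distrib)
  ultimately have "(wallis_ratio (Suc (Suc n)))^2 \<le> 2 * real n + 5"
    by linarith
  then show ?case by simp
qed simp_all

fun scaled_den :: "real \<Rightarrow> nat \<Rightarrow> real" where
  "scaled_den c 0 = 1"
| "scaled_den c (Suc 0) = c"
| "scaled_den c (Suc (Suc n)) = scaled_den c n + c / (wallis_ratio (Suc (Suc n)))^2 * scaled_den c (Suc n)"

lemma scaled_den_ge:
  assumes "c > 0"
  shows "scaled_den c n \<ge> min 1 c"
proof -
  have "scaled_den c n \<ge> min 1 c \<and> scaled_den c (Suc n) \<ge> min 1 c"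
  proof (induction n)
    case (Suc n)
    then have "scaled_den c (Suc n) \<ge> 0"
      using assms by (meson min.boundedI order_trans less_imp_le zero_le_one)
    then have "scaled_den c (Suc (Suc n)) \<ge> scaled_den c n"
      using assms by simp
    then show ?case using Suc by linarith
  qed simp
  then show ?thesis ..
qed

lemma scaled_den_pos: "c > 0 \<Longrightarrow> scaled_den c n > 0"
  using scaled_den_ge[of c n] by linarith

lemma scaled_den_sum_ge_ln:
  assumes c: "c > 0"
  shows "scaled_den c (Suc n) + scaled_den c n \<ge> c * min 1 c / 4 * (ln (real n + 2) - ln 2)"
proof (induction n)
  case (Suc n)
  define K where "K = c * min 1 c / 4"
  have "ln (real n + 3) - ln (real n + 2) \<le> (real n + 3) / (real n + 2) - 1"
    using ln_le_minus_one[of "(real n + 3) / (real n + 2)"] by (simp add: ln_div)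
  also have "\<dots> \<le> 4 / (2 * real n + 5)"
    by (simp add: field_simps)
  moreover have "K > 0" using c by (simp add: K_def)
  ultimately have "K * (ln (real n + 3) - ln (real n + 2)) \<le> K * (4 / (2 * real n + 5))"
    by (intro mult_left_mono) auto
  also have "\<dots> = c / (2 * real n + 5) * min 1 c"
    by (simp add: K_def)
  also have "\<dots> \<le> c / (wallis_ratio (Suc (Suc n)))^2 * scaled_den c (Suc n)"
    using c wallis_ratio_sq_le[of "Suc (Suc n)"] wallis_ratio_pos[of "Suc (Suc n)"] scaled_den_ge[OF c, of "Suc n"]
    by (intro mult_mono divide_left_mono) (auto simp del: wallis_ratio.simps)
  finally have "K * ln (real n + 3) - K * ln (real n + 2)
      \<le> scaled_den c (Suc (Suc n)) - scaled_den c n"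
    by (simp add: right_diff_distrib del: wallis_ratio.simps)
  moreover have "K * ln (real n + 2) - K * ln 2 \<le> scaled_den c (Suc n) + scaled_den c n"
    using Suc.IH by (simp add: K_def right_diff_distrib)
  ultimately have "K * ln (real n + 3) - K * ln 2 \<le> scaled_den c (Suc (Suc n)) + scaled_den c (Suc n)"
    by linarith
  then show ?case by (simp add: K_def right_diff_distrib add.commute)
qed (use c in simp)

lemma scaled_den_continuant_recurrence:
  fixes r b :: real
  assumes r: "r > 0"
  defines "Q n \<equiv> fact n * r^n * wallis_ratio n * scaled_den (b/r) n"
  shows "Q (Suc (Suc n)) = b * Q (Suc n) + (real n + 2)^2 * r^2 * Q n"
proof -
  define W where "W = wallis_ratio (Suc (Suc n))"
  define g0 where "g0 = scaled_den (b/r) n"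
  define g1 where "g1 = scaled_den (b/r) (Suc n)"
  have W: "W > 0" unfolding W_def by (rule wallis_ratio_pos)
  have w1: "wallis_ratio (Suc n) = (real n + 2) / W"
    using wallis_ratio_mult_Suc[of "Suc n"] W unfolding W_def by (simp add: field_simps)
  have w0: "(real n + 2) * wallis_ratio n = (real n + 1) * W"
    unfolding W_def by simp
  have "Q (Suc (Suc n)) = fact (Suc (Suc n)) * r^Suc (Suc n) * W * (g0 + (b/r) / W^2 * g1)"
    unfolding Q_def W_def g0_def g1_def by (simp only: scaled_den.simps)
  moreover have "b * Q (Suc n) = fact (Suc (Suc n)) * r^Suc (Suc n) * W * ((b/r) / W^2 * g1)"
    unfolding Q_def w1 g1_def[symmetric] using W r by (simp add: field_simps power2_eq_square)
  moreover have "(real n + 2)^2 * r^2 * Q n = (real n + 2) * r^2 * fact n * r^n * g0 * ((real n + 2) * wallis_ratio n)"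
    unfolding Q_def g0_def by (simp add: power2_eq_square mult_ac)
  then have "(real n + 2)^2 * r^2 * Q n = fact (Suc (Suc n)) * r^Suc (Suc n) * W * g0"
    unfolding w0 by (simp add: algebra_simps power2_eq_square)
  ultimately show ?thesis by (simp add: algebra_simps)
qed

lemma cf_den_square_numerators:
  assumes r: "r > 0"
  shows "cf_den (square_numerators r) b (Suc n) = fact n * r^n * wallis_ratio n * scaled_den (b/r) n"
proof -
  have "cf_den (square_numerators r) b (Suc n) = fact n * r^n * wallis_ratio n * scaled_den (b/r) n \<and>
      cf_den (square_numerators r) b (Suc (Suc n)) = fact (Suc n) * r^(Suc n) * wallis_ratio (Suc n) * scaled_den (b/r) (Suc n)"
  proof (induction n)
    case (Suc n)
    then have IH: "cf_den (square_numerators r) b (Suc n) = fact n * r^n * wallis_ratio n * scaled_den (b/r) n"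
      "cf_den (square_numerators r) b (Suc (Suc n)) = fact (Suc n) * r^(Suc n) * wallis_ratio (Suc n) * scaled_den (b/r) (Suc n)"
      by blast+
    have "cf_den (square_numerators r) b (Suc (Suc (Suc n)))
        = b * cf_den (square_numerators r) b (Suc (Suc n)) + (real n + 2)^2 * r^2 * cf_den (square_numerators r) b (Suc n)"
      using cf_den.simps(3)[of "square_numerators r" b "Suc n"] by (simp add: add.commute)
    also have "\<dots> = fact (Suc (Suc n)) * r^Suc (Suc n) * wallis_ratio (Suc (Suc n)) * scaled_den (b/r) (Suc (Suc n))"
      unfolding IH by (rule scaled_den_continuant_recurrence[OF r, symmetric])
    finally show ?case using IH by blast
  qed (use r in simp)
  then show ?thesis ..
qed

lemma prod_square_numerators: "(\<Prod>j=1..n. square_numerators r j) = (fact n * r^n)^2"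
proof -
  have "(\<Prod>j=1..n. square_numerators r j) = (\<Prod>j=1..n. real j * r)^2"
    by (simp add: power_mult_distrib prod_power_distrib)
  also have "(\<Prod>j=1..n. real j * r) = fact n * r^n"
    by (simp add: prod.distrib fact_prod)
  finally show ?thesis .
qed

lemma cf_convergent_square_numerators_diff:
  assumes r: "r > 0" and b: "b > 0"
  shows "\<bar>cf_convergent (square_numerators r) b (Suc N) - cf_convergent (square_numerators r) b N\<bar>
    = r / (scaled_den (b/r) (Suc N) * scaled_den (b/r) N)"
proof -
  have g: "scaled_den (b/r) n > 0" for n
    using scaled_den_pos r b by simp
  define M where "M = real N + 1"
  define F where "F = fact N * r^N"
  define G0 where "G0 = scaled_den (b/r) N"
  define G1 where "G1 = scaled_den (b/r) (Suc N)"
  have "M > 0" "F > 0" "G0 > 0" "G1 > 0"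
    using r g unfolding M_def F_def G0_def G1_def by simp_all
  have F_Suc: "fact (Suc N) * r^(Suc N) = M * r * F"
    unfolding M_def F_def by (simp add: algebra_simps)
  have "\<bar>cf_convergent (square_numerators r) b (Suc N) - cf_convergent (square_numerators r) b N\<bar>
      = (\<Prod>j=1..Suc N. square_numerators r j)
        / (cf_den (square_numerators r) b (Suc (Suc N)) * cf_den (square_numerators r) b (Suc N))"
    using b by (intro cf_convergent_diff) auto
  also have "\<dots> = (M * r * F)^2 / ((M * r * F * wallis_ratio (Suc N) * G1) * (F * wallis_ratio N * G0))"
    unfolding prod_square_numerators cf_den_square_numerators[OF r] F_Suc
      F_def[symmetric] G0_def[symmetric] G1_def[symmetric] ..
  also have "\<dots> = M * r / ((wallis_ratio (Suc N) * wallis_ratio N) * G1 * G0)"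
    using \<open>M > 0\<close> \<open>F > 0\<close> \<open>G0 > 0\<close> \<open>G1 > 0\<close> r wallis_ratio_pos[of N] wallis_ratio_pos[of "Suc N"]
    by (simp add: field_simps power2_eq_square)
  also have "\<dots> = r / (G1 * G0)"
    unfolding wallis_ratio_mult_Suc M_def by simp
  finally show ?thesis unfolding G0_def G1_def .
qed

lemma cf_convergent_square_numerators_diff_tendsto:
  assumes r: "r > 0" and b: "b > 0"
  shows "(\<lambda>N. \<bar>cf_convergent (square_numerators r) b (Suc N) - cf_convergent (square_numerators r) b N\<bar>) \<longlonglongrightarrow> 0"
proof -
  define c where "c = b / r"
  define m where "m = min 1 c"
  have c: "c > 0" and m: "m > 0" using r b by (simp_all add: c_def m_def)
  have "filterlim (\<lambda>N. scaled_den c (Suc N) * scaled_den c N) at_top sequentially"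
  proof (rule filterlim_at_top_mono)
    show "filterlim (\<lambda>N. m / 2 * (c * m / 4 * (ln (real N + 2) - ln 2))) at_top sequentially"
      using c m by real_asymp
    show "\<forall>\<^sub>F N in sequentially. m / 2 * (c * m / 4 * (ln (real N + 2) - ln 2)) \<le> scaled_den c (Suc N) * scaled_den c N"
    proof (intro always_eventually allI)
      fix N
      have g: "scaled_den c (Suc N) \<ge> m" "scaled_den c N \<ge> m"
        using scaled_den_ge[OF c] unfolding m_def by blast+
      have "m * scaled_den c N \<le> scaled_den c (Suc N) * scaled_den c N"
        "m * scaled_den c (Suc N) \<le> scaled_den c (Suc N) * scaled_den c N"
        using g m by (auto intro: mult_right_mono mult_left_mono)
      then have "m / 2 * (scaled_den c (Suc N) + scaled_den c N) \<le> scaled_den c (Suc N) * scaled_den c N"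
        by (simp add: algebra_simps)
      moreover have "m / 2 * (c * m / 4 * (ln (real N + 2) - ln 2)) \<le> m / 2 * (scaled_den c (Suc N) + scaled_den c N)"
        using scaled_den_sum_ge_ln[OF c, of N] m unfolding m_def by (intro mult_left_mono) auto
      ultimately show "m / 2 * (c * m / 4 * (ln (real N + 2) - ln 2)) \<le> scaled_den c (Suc N) * scaled_den c N"
        by linarith
    qed
  qed
  then have "(\<lambda>N. r / (scaled_den c (Suc N) * scaled_den c N)) \<longlonglongrightarrow> 0"
    by (intro tendsto_divide_0[OF tendsto_const] filterlim_at_top_imp_at_infinity)
  then show ?thesis
    unfolding cf_convergent_square_numerators_diff[OF r b] c_def .
qed

lemma cf_convergent_square_numerators_tendsto:
  assumes r: "r > 0" and b: "b > 0"
  shows "cf_convergent (square_numerators r) b \<longlonglongrightarrow> r / fs_moment ((b + r) / (2 * r)) 0 - b"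
proof -
  define z where "z = (b + r) / (2 * r)"
  have z: "z > 0" and b_eq: "b = r * (2 * z - 1)"
    using r b by (simp_all add: z_def field_simps)
  have M: "fs_moment z n > 0" for n
    using fs_moment_pos[OF z] .
  define t where "t n = (real n + 1) * r * fs_moment z (Suc n) / fs_moment z n" for n
  have t_nonneg: "t n \<ge> 0" for n
    using M r by (simp add: t_def less_imp_le)
  have den: "b + t (Suc n) = (real n + 1) * r * fs_moment z n / fs_moment z (Suc n)" for n
  proof -
    have "(real n + 2) * fs_moment z (Suc (Suc n)) + (2 * z - 1) * fs_moment z (Suc n) = (real n + 1) * fs_moment z n"
      using fs_moment_recurrence[OF z, of "Suc n"] by (simp add: algebra_simps)
    moreover have "b + t (Suc n)
        = r * ((real n + 2) * fs_moment z (Suc (Suc n)) + (2 * z - 1) * fs_moment z (Suc n)) / fs_moment z (Suc n)"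
      using M[of "Suc n"] unfolding t_def b_eq by (simp add: field_simps)
    ultimately show ?thesis by simp
  qed
  have tail: "t n = square_numerators r (Suc n) / (b + t (Suc n))" for n
  proof -
    define k where "k = real n + 1"
    have "k > 0" and sq: "square_numerators r (Suc n) = k^2 * r^2"
      unfolding k_def by simp_all
    have bt: "b + t (Suc n) = k * r * fs_moment z n / fs_moment z (Suc n)"
      unfolding k_def by (rule den)
    have tn: "t n = k * r * fs_moment z (Suc n) / fs_moment z n"
      unfolding k_def t_def ..
    show ?thesis
      using \<open>k > 0\<close> M[of n] M[of "Suc n"] r unfolding sq bt tn by (simp add: field_simps power2_eq_square)
  qed
  have M1: "fs_moment z (Suc 0) = 1 - (2 * z - 1) * fs_moment z 0"
    using fs_moment_recurrence[OF z, of 0] by simp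
  have t0: "t 0 = r / fs_moment z 0 - b"
    using M[of 0] unfolding t_def b_eq by (simp add: M1 field_simps)
  have "cf_convergent (square_numerators r) b \<longlonglongrightarrow> t 0"
    by (rule cf_convergent_tendsto_tail[OF _ b t_nonneg tail cf_convergent_square_numerators_diff_tendsto[OF r b]])
      simp
  then show ?thesis unfolding t0 z_def .
qed

lemma cf_K_square_numerators:
  assumes r: "r > 0" and b: "b > 0"
  shows "convergent (cf_convergent (square_numerators r) b)"
    and "1 / (2 * b + 2 * cf_K (square_numerators r) b) = fs_moment ((b + r) / (2 * r)) 0 / (2 * r)"
proof -
  define M where "M = fs_moment ((b + r) / (2 * r)) 0"
  have "M > 0" unfolding M_def using r b by (intro fs_moment_pos) simp
  have lim: "cf_convergent (square_numerators r) b \<longlonglongrightarrow> r / M - b"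
    unfolding M_def by (rule cf_convergent_square_numerators_tendsto[OF r b])
  then show "convergent (cf_convergent (square_numerators r) b)"
    by (rule convergentI)
  have "cf_K (square_numerators r) b = r / M - b"
    unfolding cf_K_def using lim by (rule limI)
  then show "1 / (2 * b + 2 * cf_K (square_numerators r) b) = M / (2 * r)"
    using \<open>M > 0\<close> r by simp
qed

section \<open>The functional equation\<close>

lemma functional_equation_unique:
  fixes f F g :: "real \<Rightarrow> real" and d A :: real
  assumes d: "d > 0"
    and f: "\<forall>s>A. f s + f (s + d) = g s" and F: "\<forall>s>A. F s + F (s + d) = g s"
    and f_lim: "(f \<longlongrightarrow> 0) at_top" and F_lim: "(F \<longlongrightarrow> 0) at_top"
  shows "\<forall>s>A. f s = F s"
proof (intro allI impI)
  fix s assume "s > A"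
  define h where "h x = f x - F x" for x
  have h_shift: "h (x + d) = - h x" if "x > A" for x
    using f[rule_format, OF that] F[rule_format, OF that] unfolding h_def by linarith
  have h_orbit: "\<bar>h (s + real n * d)\<bar> = \<bar>h s\<bar>" for n
  proof (induction n)
    case (Suc n)
    have step: "s + real (Suc n) * d = (s + real n * d) + d"
      by (simp add: algebra_simps)
    have "real n * d \<ge> 0" using d by simp
    then have "h (s + real (Suc n) * d) = - h (s + real n * d)"
      unfolding step using \<open>s > A\<close> by (intro h_shift) linarith
    then show ?case using Suc.IH by simp
  qed simp
  have "filterlim (\<lambda>n. s + real n * d) at_top sequentially"
    using d by real_asymp
  moreover have "(h \<longlongrightarrow> 0) at_top"
    unfolding h_def using tendsto_diff[OF f_lim F_lim] by simp
  ultimately have "(\<lambda>n. \<bar>h (s + real n * d)\<bar>) \<longlonglongrightarrow> 0"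
    using filterlim_compose tendsto_rabs_zero by blast
  then have "h s = 0"
    unfolding h_orbit by (simp add: LIMSEQ_const_iff)
  then show "f s = F s" unfolding h_def by simp
qed

lemma shifted_cf_K_solution:
  fixes r e A :: real and F g :: "real \<Rightarrow> real"
  assumes r: "r > 0" and pos: "\<And>s. s > A \<Longrightarrow> e + s > 0"
    and g: "\<And>s. g s = 1 / (e + s + r)"
    and F: "\<And>s. F s = 1 / (2 * e + 2 * s + 2 * cf_K (square_numerators r) (e + s))"
  shows "(\<forall>s>A. convergent (cf_convergent (square_numerators r) (e + s))) \<and>
    (\<forall>s>A. F s + F (s + 2 * r) = g s) \<and> (F \<longlongrightarrow> 0) at_top \<and>
    (\<forall>f. (\<forall>s>A. f s + f (s + 2 * r) = g s) \<and> (f \<longlongrightarrow> 0) at_top \<longrightarrow> (\<forall>s>A. f s = F s))"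
proof -
  define z where "z s = (e + s + r) / (2 * r)" for s
  have z: "z s > 0" if "s > A" for s
    using pos[OF that] r by (simp add: z_def)
  have z_shift: "z (s + 2 * r) = z s + 1" for s
    using r by (simp add: z_def field_simps)
  have F_moment: "F s = fs_moment (z s) 0 / (2 * r)" if "s > A" for s
    using cf_K_square_numerators(2)[OF r pos[OF that]] unfolding F z_def
    by (simp add: algebra_simps)
  have conv: "\<forall>s>A. convergent (cf_convergent (square_numerators r) (e + s))"
    using cf_K_square_numerators(1)[OF r pos] by blast
  have eq: "\<forall>s>A. F s + F (s + 2 * r) = g s"
  proof (intro allI impI)
    fix s assume "s > A"
    then have "F s + F (s + 2 * r) = (fs_moment (z s) 0 + fs_moment (z s + 1) 0) / (2 * r)"
      using r by (simp add: F_moment z_shift add_divide_distrib)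
    also have "\<dots> = g s"
      using fs_moment_0_shift[OF z[OF \<open>s > A\<close>]] r unfolding g z_def by simp
    finally show "F s + F (s + 2 * r) = g s" .
  qed
  have lim: "(F \<longlongrightarrow> 0) at_top"
  proof (rule tendsto_sandwich[OF _ _ tendsto_const])
    show "((\<lambda>s. 1 / (e + s + r)) \<longlongrightarrow> 0) at_top"
      by real_asymp
    have "0 \<le> F s \<and> F s \<le> 1 / (e + s + r)" if "s > A" for s
      using fs_moment_pos[OF z[OF that], of 0] fs_moment_0_le[OF z[OF that]] r pos[OF that]
      unfolding F_moment[OF that] by (auto simp: z_def field_simps)
    then show "\<forall>\<^sub>F s in at_top. 0 \<le> F s" "\<forall>\<^sub>F s in at_top. F s \<le> 1 / (e + s + r)"
      by (auto intro: eventually_mono[OF eventually_gt_at_top[of A]])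
  qed
  have "\<forall>s>A. f s = F s" if "(\<forall>s>A. f s + f (s + 2 * r) = g s) \<and> (f \<longlongrightarrow> 0) at_top" for f
    using r that eq lim by (intro functional_equation_unique[of "2 * r" A f g F]) auto
  then show ?thesis
    using conv eq lim by blast
qed

theorem corollary3:
  fixes r :: real
  assumes "r > 0"
  shows
   "(\<forall>s>\<bar>r - 1\<bar>. convergent (cf_convergent (\<lambda>n. (real n)^2 * r^2) (1 - r + s))) \<and>
    (let F1 = (\<lambda>s. 1 / (2 - 2*r + 2*s + 2 * cf_K (\<lambda>n. (real n)^2 * r^2) (1 - r + s))) in
      (\<forall>s>\<bar>r - 1\<bar>. F1 s + F1 (s + 2*r) = 1 / (s + 1)) \<and> (F1 \<longlongrightarrow> 0) at_top \<and>
      (\<forall>f :: real \<Rightarrow> real.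
          (\<forall>s>\<bar>r - 1\<bar>. f s + f (s + 2*r) = 1 / (s + 1)) \<and> (f \<longlongrightarrow> 0) at_top
          \<longrightarrow> (\<forall>s>\<bar>r - 1\<bar>. f s = F1 s))) \<and>
    (\<forall>s>\<bar>r - 1\<bar>. convergent (cf_convergent (\<lambda>n. (real n)^2 * r^2) (r - 1 + s))) \<and>
    (let F2 = (\<lambda>s. 1 / (2*r - 2 + 2*s + 2 * cf_K (\<lambda>n. (real n)^2 * r^2) (r - 1 + s))) in
      (\<forall>s>\<bar>r - 1\<bar>. F2 s + F2 (s + 2*r) = 1 / (s + 2*r - 1)) \<and> (F2 \<longlongrightarrow> 0) at_top \<and>
      (\<forall>f :: real \<Rightarrow> real.
          (\<forall>s>\<bar>r - 1\<bar>. f s + f (s + 2*r) = 1 / (s + 2*r - 1)) \<and> (f \<longlongrightarrow> 0) at_top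
          \<longrightarrow> (\<forall>s>\<bar>r - 1\<bar>. f s = F2 s)))"
proof -
  have "(1 - r) + s > 0" "(r - 1) + s > 0" if "s > \<bar>r - 1\<bar>" for s
    using that by linarith+
  note first = shifted_cf_K_solution[OF assms this(1), where g = "\<lambda>s. 1 / (s + 1)"
      and F = "\<lambda>s. 1 / (2 - 2*r + 2*s + 2 * cf_K (square_numerators r) (1 - r + s))"]
   and second = shifted_cf_K_solution[OF assms this(2), where g = "\<lambda>s. 1 / (s + 2*r - 1)"
      and F = "\<lambda>s. 1 / (2*r - 2 + 2*s + 2 * cf_K (square_numerators r) (r - 1 + s))"]
  show ?thesis
    unfolding Let_def using first second by (simp add: algebra_simps)
qed

end
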